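(* Let $B$ be a Ferrers board with $n$ columns, padded with columns of height zero on the left so that its root vector $\xi(B)=\langle z_1,\ldots,z_n\rangle$ has only non-negative entries. For each integer $k$ let $v_k$ be the number of entries of $\xi(B)$ equal to $k$, and let $M$ be the greatest integer with $v_M\neq 0$. If, for every $0\le i<M-1$, $v_i>1$ implies $v_{i+1}>1$, then $B$ is connected by a sequence of edges in the rook equivalence graph $G(B)$ to a Ferrers board $B'$ whose root vector has the form $\xi(B')=\langle 0,1,\ldots,M-1,M,\ldots,z_n\rangle$, i.e. the first $M+1$ entries of $\xi(B')$ are $0,1,\ldots,M$ in increasing order.
   Context: A Ferrers board is given by a weakly increasing sequence of non-negative integers $B=(b_1,\ldots,b_n)$ of column heights; it is the set of unit cells in the first quadrant lying in column $i$ and rows $1,\ldots,b_i$. Prepending columns of height $0$ on the left does not change the board, and boards are compared using the same number of columns by such padding. A placement of $k$ rooks on $B$ is a set of $k$ cells of $B$ no two in the same row or column; $r_k(B)$ is the number of such placements. Two boards are rook equivalent if they have equal $r_k$ for all $k\ge 0$. The root vector of $B$ is $\xi(B)=\langle 0-b_1,1-b_2,\ldots,(n-1)-b_n\rangle$. The rook equivalence graph $G(B)$ has as vertices all Ferrers boards rook equivalent to $B$, and $\{B_1,B_2\}$ is an edge iff, written with the same number of columns, $B_1$ and $B_2$ differ in exactly two columns $i$ and $j$, where $B_1$ has $k$ more cells than $B_2$ in column $i$ and $k$ fewer cells than $B_2$ in column $j$, for some $k>0$. *)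

theory Defs
  imports Main
begin

text \<open>A Ferrers board is a list of column heights (0-indexed columns), weakly increasing.\<close>
definition ferrers :: "nat list \<Rightarrow> bool" where
  "ferrers B \<longleftrightarrow> sorted B"

definition cells :: "nat list \<Rightarrow> (nat \<times> nat) set" where
  "cells B = {(i, r). i < length B \<and> 1 \<le> r \<and> r \<le> B ! i}"

definition rook_num :: "nat \<Rightarrow> nat list \<Rightarrow> nat" where
  "rook_num k B = card {S. S \<subseteq> cells B \<and> card S = k \<and> inj_on fst S \<and> inj_on snd S}"

definition rook_equiv :: "nat list \<Rightarrow> nat list \<Rightarrow> bool" where
  "rook_equiv B1 B2 \<longleftrightarrow> (\<forall>k. rook_num k B1 = rook_num k B2)"

definition root_vec :: "nat list \<Rightarrow> int list" where
  "root_vec B = map (\<lambda>i. int i - int (B ! i)) [0..<length B]"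

definition board_edge :: "nat list \<Rightarrow> nat list \<Rightarrow> bool" where
  "board_edge B1 B2 \<longleftrightarrow>
     (\<exists>p1 p2. let C1 = replicate p1 0 @ B1; C2 = replicate p2 0 @ B2 in
        length C1 = length C2 \<and>
        (\<exists>i j k. i < length C1 \<and> j < length C1 \<and> i \<noteq> j \<and> 0 < k \<and>
           C1 ! i = C2 ! i + k \<and> C1 ! j + k = C2 ! j \<and>
           (\<forall>l < length C1. l \<noteq> i \<and> l \<noteq> j \<longrightarrow> C1 ! l = C2 ! l)))"

definition G_edge :: "nat list \<Rightarrow> nat list \<Rightarrow> nat list \<Rightarrow> bool" where
  "G_edge B X Y \<longleftrightarrow> ferrers X \<and> ferrers Y \<and> rook_equiv X B \<and> rook_equiv Y B \<and> board_edge X Y"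

definition root_count :: "nat list \<Rightarrow> int \<Rightarrow> nat" where
  "root_count B k = length (filter (\<lambda>z. z = k) (root_vec B))"

end

theory Submission
  imports Defs "HOL-Library.Multiset"
begin

text \<open>Rook numbers are obtained by folding the entries of the root vector through steps that
  commute with each other, so boards whose root vectors are permutations of each other are rook
  equivalent (Goldman, Joichi and White). Exchanging root entries \<open>z\<^sub>i < z\<^sub>j\<close> at positions
  \<open>i < j\<close> moves \<open>z\<^sub>j - z\<^sub>i\<close> cells from column \<open>i\<close> to column \<open>j\<close>, an edge of \<open>G(B)\<close> as long as
  the result is again a Ferrers board. The combinatorial core is that, under the counting
  hypothesis, a root vector that does not yet begin with \<open>0, 1, \<dots>, M\<close> always admits such an
  exchange; every exchange decreases \<open>\<Sum> k z\<^sub>k\<close>, so repeating it terminates.\<close>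

section \<open>Rook numbers and root vectors\<close>

definition rook_placements :: "nat list \<Rightarrow> nat \<Rightarrow> (nat \<times> nat) set set" where
  "rook_placements B k = {S. S \<subseteq> cells B \<and> card S = k \<and> inj_on fst S \<and> inj_on snd S}"

lemma rook_num_eq_card: "rook_num k B = card (rook_placements B k)"
  by (simp add: rook_num_def rook_placements_def)

lemma finite_cells: "finite (cells B)"
proof (rule finite_subset)
  show "cells B \<subseteq> {..<length B} \<times> {..sum_list B}"
    by (auto simp: cells_def intro: order_trans[OF _ elem_le_sum_list])
qed simp

lemma finite_rook_placements: "finite (rook_placements B k)"
  by (rule finite_subset[of _ "Pow (cells B)"]) (auto simp: rook_placements_def finite_cells)

lemma rook_placement_finite: "S \<in> rook_placements B k \<Longrightarrow> finite S"
  using finite_cells finite_subset by (auto simp: rook_placements_def)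

lemma cells_snoc: "cells (B @ [c]) = cells B \<union> {(length B, r) | r. 1 \<le> r \<and> r \<le> c}"
  by (auto simp: cells_def nth_append less_Suc_eq)

lemma cells_column_less: "(i, r) \<in> cells B \<Longrightarrow> i < length B"
  by (auto simp: cells_def)

lemma rows_rook_placement:
  assumes "sorted (B @ [c])" and "T \<in> rook_placements B m"
  shows "snd ` T \<subseteq> {1..c}" and "card (snd ` T) = m"
proof -
  have "\<forall>x\<in>set B. x \<le> c" using assms(1) by (simp add: sorted_append)
  then show "snd ` T \<subseteq> {1..c}"
    using assms(2) by (force simp: rook_placements_def cells_def dest: nth_mem)
  show "card (snd ` T) = m" using assms(2) by (simp add: rook_placements_def card_image)
qed

lemma rook_placements_snoc_avoiding:
  "{S \<in> rook_placements (B @ [c]) k. length B \<notin> fst ` S} = rook_placements B k"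
proof -
  have "cells B = {x \<in> cells (B @ [c]). fst x \<noteq> length B}"
    by (auto simp: cells_def nth_append)
  then have "S \<subseteq> cells (B @ [c]) \<and> length B \<notin> fst ` S \<longleftrightarrow> S \<subseteq> cells B" for S
    by (auto simp: image_iff)
  then show ?thesis by (auto simp: rook_placements_def)
qed

lemma last_column_notin_rook_placement: "T \<in> rook_placements B m \<Longrightarrow> (length B, r) \<notin> T"
  using cells_column_less by (fastforce simp: rook_placements_def)

lemma insert_last_column_rook_placement:
  assumes "T \<in> rook_placements B m" "r \<in> {1..c} - snd ` T"
  shows "insert (length B, r) T \<in> rook_placements (B @ [c]) (Suc m)"
proof -
  have "fst ` T \<subseteq> {..<length B}"
    using assms(1) cells_column_less by (fastforce simp: rook_placements_def)
  with assms last_column_notin_rook_placement[OF assms(1)] rook_placement_finite[OF assms(1)]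
  show ?thesis by (auto simp: rook_placements_def cells_snoc)
qed

lemma remove_last_column_rook_placement:
  assumes S: "S \<in> rook_placements (B @ [c]) (Suc m)" and r: "(length B, r) \<in> S"
  shows "S - {(length B, r)} \<in> rook_placements B m" and "r \<in> {1..c} - snd ` (S - {(length B, r)})"
proof -
  have inj: "inj_on fst S" "inj_on snd S" and sub: "S \<subseteq> cells (B @ [c])"
    and card: "card S = Suc m" using S by (auto simp: rook_placements_def)
  have "S - {(length B, r)} \<subseteq> cells B"
  proof
    fix x assume x: "x \<in> S - {(length B, r)}"
    then have "fst x \<noteq> length B" using inj(1) r by (auto) (metis fst_conv inj_onD)
    then show "x \<in> cells B" using x sub by (auto simp: cells_snoc)
  qed
  then show "S - {(length B, r)} \<in> rook_placements B m"
    using inj card r rook_placement_finite[OF S] by (auto simp: rook_placements_def intro: inj_on_subset)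
  have "r \<notin> snd ` (S - {(length B, r)})" using inj(2) r by auto (metis snd_conv inj_onD prod.inject)
  moreover have "r \<in> {1..c}" using sub r cells_column_less by (fastforce simp: cells_snoc)
  ultimately show "r \<in> {1..c} - snd ` (S - {(length B, r)})" by blast
qed

lemma rook_placements_snoc_using:
  "bij_betw (\<lambda>(T, r). insert (length B, r) T)
     (SIGMA T:rook_placements B m. {1..c} - snd ` T)
     {S \<in> rook_placements (B @ [c]) (Suc m). length B \<in> fst ` S}"
  (is "bij_betw ?f ?A ?S")
proof (rule bij_betw_imageI)
  show "inj_on ?f ?A"
  proof (rule inj_onI, clarify)
    fix T r T' r'
    assume T: "T \<in> rook_placements B m" and T': "T' \<in> rook_placements B m"
      and eq: "insert (length B, r) T = insert (length B, r') T'"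
    then have "r = r'" using last_column_notin_rook_placement by blast
    with eq last_column_notin_rook_placement[OF T] last_column_notin_rook_placement[OF T']
    show "T = T' \<and> r = r'" by (metis insert_ident)
  qed
  show "?f ` ?A = ?S"
  proof (intro equalityI subsetI)
    fix S assume "S \<in> ?f ` ?A"
    then show "S \<in> ?S" using insert_last_column_rook_placement by force
  next
    fix S assume S: "S \<in> ?S"
    then obtain r where r: "(length B, r) \<in> S" by force
    have "S \<in> rook_placements (B @ [c]) (Suc m)" using S by simp
    then have "(S - {(length B, r)}, r) \<in> ?A" using remove_last_column_rook_placement r by blast
    moreover have "S = ?f (S - {(length B, r)}, r)" using r by auto
    ultimately show "S \<in> ?f ` ?A" by blast
  qed
qed

lemma rook_num_snoc:
  assumes "sorted (B @ [c])"
  shows "int (rook_num (Suc m) (B @ [c])) = int (rook_num (Suc m) B) + int (rook_num m B) * (int c - int m)"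
proof -
  define P where "P = rook_placements (B @ [c]) (Suc m)"
  define Avoid where "Avoid = {S \<in> P. length B \<notin> fst ` S}"
  define Use where "Use = {S \<in> P. length B \<in> fst ` S}"
  have free_rows: "int (card ({1..c} - snd ` T)) = int c - int m" if "T \<in> rook_placements B m" for T
  proof -
    have rows: "snd ` T \<subseteq> {1..c}" "card (snd ` T) = m"
      using rows_rook_placement[OF assms that] by auto
    then have "m \<le> c" using card_mono[OF _ rows(1)] by simp
    with rows show ?thesis
      using rook_placement_finite[OF that] by (simp add: card_Diff_subset)
  qed
  have "int (card Use) = int (card (SIGMA T:rook_placements B m. {1..c} - snd ` T))"
    unfolding Use_def P_def using bij_betw_same_card[OF rook_placements_snoc_using] by metis
  also have "\<dots> = (\<Sum>T\<in>rook_placements B m. int (card ({1..c} - snd ` T)))"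
    by (simp add: finite_rook_placements)
  also have "\<dots> = (\<Sum>T\<in>rook_placements B m. int c - int m)"
    by (rule sum.cong[OF refl free_rows])
  finally have "int (card Use) = int (rook_num m B) * (int c - int m)"
    by (simp add: rook_num_eq_card)
  moreover have "card P = card Avoid + card Use"
  proof -
    have "finite P" by (simp add: P_def finite_rook_placements)
    then have "finite Avoid" "finite Use" by (simp_all add: Avoid_def Use_def)
    moreover have "P = Avoid \<union> Use" "Avoid \<inter> Use = {}" by (auto simp: Avoid_def Use_def)
    ultimately show ?thesis by (simp add: card_Un_disjoint)
  qed
  moreover have "Avoid = rook_placements B (Suc m)"
    unfolding Avoid_def P_def by (rule rook_placements_snoc_avoiding)
  ultimately show ?thesis by (simp add: rook_num_eq_card P_def)
qed

lemma rook_num_0: "rook_num 0 B = 1"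
proof -
  have "S \<in> rook_placements B 0 \<longleftrightarrow> S = {}" for S
  proof
    assume S: "S \<in> rook_placements B 0"
    then show "S = {}" using rook_placement_finite[OF S] by (simp add: rook_placements_def)
  qed (simp add: rook_placements_def)
  then have "rook_placements B 0 = {{}}" by blast
  then show ?thesis by (simp add: rook_num_eq_card)
qed

lemma rook_num_Nil_Suc: "rook_num (Suc k) [] = 0"
  by (auto simp: rook_num_def cells_def)

text \<open>By \<open>rook_num_snoc\<close>, appending a column of height \<open>c\<close> at index \<open>m\<close>, i.e. with root
  entry \<open>z = m - c\<close>, transforms the rook numbers by \<open>rook_step m z\<close>.\<close>
fun rook_step :: "nat \<Rightarrow> int \<Rightarrow> (nat \<Rightarrow> int) \<Rightarrow> nat \<Rightarrow> int" where
  "rook_step m z r 0 = r 0"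
| "rook_step m z r (Suc k) = r (Suc k) + (int m - z - int k) * r k"

fun rook_fold :: "nat \<Rightarrow> int list \<Rightarrow> (nat \<Rightarrow> int) \<Rightarrow> nat \<Rightarrow> int" where
  "rook_fold m [] r = r"
| "rook_fold m (z # zs) r = rook_fold (Suc m) zs (rook_step m z r)"

lemma rook_fold_append: "rook_fold m (xs @ ys) r = rook_fold (m + length xs) ys (rook_fold m xs r)"
  by (induction xs arbitrary: m r) auto

lemma length_root_vec [simp]: "length (root_vec B) = length B"
  by (simp add: root_vec_def)

lemma root_vec_snoc: "root_vec (B @ [c]) = root_vec B @ [int (length B) - int c]"
  by (simp add: root_vec_def nth_append)

lemma rook_num_eq_rook_fold:
  assumes "ferrers B"
  shows "int (rook_num k B) = rook_fold 0 (root_vec B) (\<lambda>k. of_bool (k = 0)) k"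
  using assms
proof (induction B arbitrary: k rule: rev_induct)
  case Nil
  then show ?case by (cases k) (simp_all add: root_vec_def rook_num_0 rook_num_Nil_Suc)
next
  case (snoc c B)
  then have "sorted (B @ [c])" "ferrers B" by (simp_all add: ferrers_def sorted_append)
  then show ?case
    by (cases k)
       (simp_all add: snoc.IH[symmetric] rook_num_0 root_vec_snoc rook_fold_append rook_num_snoc
         algebra_simps)
qed

lemma rook_step_commute: "rook_step (Suc m) b (rook_step m a r) = rook_step (Suc m) a (rook_step m b r)"
proof
  fix k show "rook_step (Suc m) b (rook_step m a r) k = rook_step (Suc m) a (rook_step m b r) k"
  proof (cases k)
    case (Suc j) then show ?thesis by (cases j) (simp_all add: algebra_simps)
  qed simp
qed

lemma rook_fold_move: "rook_fold m (a # ys @ zs) r = rook_fold m (ys @ a # zs) r"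
proof (induction ys arbitrary: m r)
  case (Cons y ys)
  have "rook_fold m (a # (y # ys) @ zs) r = rook_fold (Suc m) (a # ys @ zs) (rook_step m y r)"
    by (simp add: rook_step_commute)
  also have "\<dots> = rook_fold m ((y # ys) @ a # zs) r" using Cons by simp
  finally show ?case .
qed simp

lemma rook_fold_mset_eq: "mset xs = mset ys \<Longrightarrow> rook_fold m xs r = rook_fold m ys r"
proof (induction xs arbitrary: ys m r)
  case (Cons a xs)
  then obtain ys1 ys2 where ys: "ys = ys1 @ a # ys2"
    by (metis list.set_intros(1) set_mset_mset split_list)
  with Cons.prems have "mset xs = mset (ys1 @ ys2)" by simp
  then have "rook_fold m (a # xs) r = rook_fold m (a # ys1 @ ys2) r" using Cons.IH by simp
  also have "\<dots> = rook_fold m ys r" unfolding ys by (rule rook_fold_move)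
  finally show ?case .
qed simp

theorem rook_equiv_if_mset_root_vec_eq:
  assumes "ferrers X" "ferrers Y" "mset (root_vec X) = mset (root_vec Y)"
  shows "rook_equiv X Y"
  unfolding rook_equiv_def
  using rook_num_eq_rook_fold[OF assms(1)] rook_num_eq_rook_fold[OF assms(2)]
    rook_fold_mset_eq[OF assms(3)] by (metis of_nat_eq_iff)

section \<open>Root sequences\<close>

definition root_sequence :: "int list \<Rightarrow> bool" where
  "root_sequence zs \<longleftrightarrow> zs \<noteq> [] \<and> zs ! 0 = 0 \<and> (\<forall>k. Suc k < length zs \<longrightarrow> zs ! Suc k \<le> zs ! k + 1)
     \<and> (\<forall>z\<in>set zs. 0 \<le> z)"

text \<open>These are the conditions under which exchanging the entries \<open>i\<close> and \<open>j\<close> keeps every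
  step of the sequence at most \<open>1\<close>, i.e. keeps the board Ferrers.\<close>
definition swappable :: "int list \<Rightarrow> nat \<Rightarrow> nat \<Rightarrow> bool" where
  "swappable zs i j \<longleftrightarrow> 0 < i \<and> i < j \<and> j < length zs \<and> zs ! i < zs ! j \<and> zs ! j \<le> zs ! (i - 1) + 1
     \<and> (Suc j < length zs \<longrightarrow> zs ! Suc j \<le> zs ! i + 1)"

definition count_propagates :: "int list \<Rightarrow> bool" where
  "count_propagates zs \<longleftrightarrow>
     (\<forall>x\<ge>0. (\<exists>z\<in>set zs. x + 2 \<le> z) \<and> 2 \<le> count (mset zs) x \<longrightarrow> 2 \<le> count (mset zs) (x + 1))"

text \<open>Since the entries never exceed \<open>m = Max (set zs)\<close>, this says that the first \<open>m + 1\<close>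
  entries are \<open>0, 1, \<dots>, m\<close>.\<close>
definition staircase_prefix :: "int list \<Rightarrow> bool" where
  "staircase_prefix zs \<longleftrightarrow> (\<forall>k<length zs. (\<exists>z\<in>set zs. int k \<le> z) \<longrightarrow> zs ! k = int k)"

lemma root_sequence_le_index:
  assumes "root_sequence zs" "k < length zs"
  shows "zs ! k \<le> int k"
  using assms(2)
proof (induction k)
  case (Suc k)
  then show ?case using assms(1) by (fastforce simp: root_sequence_def)
qed (use assms(1) in \<open>simp add: root_sequence_def\<close>)

lemma root_sequence_nonneg: "root_sequence zs \<Longrightarrow> k < length zs \<Longrightarrow> 0 \<le> zs ! k"
  by (simp add: root_sequence_def)

lemma count_mset_le_1_iff:
  "count (mset zs) x \<le> 1 \<longleftrightarrow> (\<forall>a<length zs. \<forall>b<length zs. zs ! a = x \<longrightarrow> zs ! b = x \<longrightarrow> a = b)"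
proof -
  have "count (mset zs) x = card {k. k < length zs \<and> zs ! k = x}"
    by (simp add: count_mset count_list_eq_length_filter length_filter_conv_card eq_commute)
  then show ?thesis by (auto simp: card_le_Suc0_iff_eq)
qed

lemma count_propagates_mset_cong: "mset xs = mset ys \<Longrightarrow> count_propagates xs = count_propagates ys"
  unfolding count_propagates_def by (metis set_mset_mset)

lemma count_propagates_if_Max:
  assumes "\<forall>x::int. 0 \<le> x \<and> x < Max (set zs) - 1 \<and> count (mset zs) x > 1 \<longrightarrow> count (mset zs) (x + 1) > 1"
  shows "count_propagates zs"
  unfolding count_propagates_def
proof (intro allI impI)
  fix x :: int assume x: "0 \<le> x" "(\<exists>z\<in>set zs. x + 2 \<le> z) \<and> 2 \<le> count (mset zs) x"
  then obtain z where "z \<in> set zs" "x + 2 \<le> z" by blast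
  then have "x < Max (set zs) - 1" using Max_ge[OF finite_set, of z zs] by linarith
  then show "2 \<le> count (mset zs) (x + 1)" using assms x by fastforce
qed

lemma take_staircase_prefix:
  assumes "staircase_prefix zs" "zs \<noteq> []" "\<forall>z\<in>set zs. 0 \<le> z" "\<forall>k<length zs. zs ! k \<le> int k"
  shows "take (nat (Max (set zs)) + 1) zs = map int [0..<nat (Max (set zs)) + 1]"
proof -
  let ?M = "Max (set zs)"
  have "?M \<in> set zs" using assms(2) by simp
  then obtain j where j: "j < length zs" "zs ! j = ?M" by (auto simp: in_set_conv_nth)
  have "0 \<le> ?M" using assms(3) \<open>?M \<in> set zs\<close> by blast
  then have len: "nat ?M + 1 \<le> length zs" using assms(4) j by fastforce
  have "zs ! k = int k" if "k < nat ?M + 1" for k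
  proof -
    have "k < length zs" "int k \<le> ?M" using len that \<open>0 \<le> ?M\<close> by auto
    then show ?thesis using assms(1) \<open>?M \<in> set zs\<close> unfolding staircase_prefix_def by blast
  qed
  then show ?thesis using len by (intro nth_equalityI) (auto simp del: upt_Suc)
qed

lemma root_sequence_butlast:
  assumes "root_sequence zs" "2 \<le> length zs"
  shows "root_sequence (butlast zs)"
proof -
  have "butlast zs \<noteq> []" using assms(2) by (cases zs rule: rev_cases) auto
  with assms show ?thesis by (auto simp: root_sequence_def nth_butlast dest: in_set_butlastD)
qed

lemma count_propagates_butlast:
  assumes "count_propagates zs" "zs \<noteq> []" "last zs = 0"
  shows "count_propagates (butlast zs)"
proof -
  have zs: "zs = butlast zs @ [0]" using append_butlast_last_id[OF assms(2)] assms(3) by simp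
  have count: "count (mset zs) y = count (mset (butlast zs)) y + of_bool (y = 0)" for y
    by (subst zs) simp
  show ?thesis unfolding count_propagates_def
  proof (intro allI impI)
    fix x :: int
    assume x: "0 \<le> x" and "(\<exists>z\<in>set (butlast zs). x + 2 \<le> z) \<and> 2 \<le> count (mset (butlast zs)) x"
    then have "(\<exists>z\<in>set zs. x + 2 \<le> z) \<and> 2 \<le> count (mset zs) x"
      by (auto simp: count dest: in_set_butlastD)
    then have "2 \<le> count (mset zs) (x + 1)" using assms(1) x by (simp add: count_propagates_def)
    then show "2 \<le> count (mset (butlast zs)) (x + 1)" using x by (simp add: count)
  qed
qed

lemma staircase_prefix_of_butlast:
  assumes "staircase_prefix (butlast zs)" "root_sequence zs" "last zs = 0"
  shows "staircase_prefix zs"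
  unfolding staircase_prefix_def
proof (intro allI impI)
  fix k assume "k < length zs" and "\<exists>z\<in>set zs. int k \<le> z"
  then obtain j where j: "j < length zs" "int k \<le> zs ! j" by (auto simp: in_set_conv_nth)
  show "zs ! k = int k"
  proof (cases "j = length zs - 1")
    case True
    moreover have "zs \<noteq> []" using j(1) by auto
    ultimately have "k = 0" using j assms(3) by (simp add: last_conv_nth)
    then show ?thesis using assms(2) by (simp add: root_sequence_def)
  next
    case False
    then have j': "j < length (butlast zs)" using j(1) by simp
    moreover have "k \<le> j" using j root_sequence_le_index[OF assms(2) j(1)] by simp
    ultimately have "butlast zs ! k = int k"
      using assms(1) nth_mem[OF j'] j(2) unfolding staircase_prefix_def
      by (metis le_less_trans nth_butlast)
    then show ?thesis using \<open>k \<le> j\<close> j' by (simp add: nth_butlast)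
  qed
qed

lemma swappable_of_butlast:
  assumes "swappable (butlast zs) i j" "root_sequence zs" "last zs = 0"
  shows "swappable zs i j"
proof -
  have ij: "0 < i" "i < j" "Suc j < length zs" using assms(1) by (auto simp: swappable_def)
  have "zs ! Suc j \<le> zs ! i + 1"
  proof (cases "Suc j = length zs - 1")
    case True
    moreover have "zs \<noteq> []" using ij by auto
    ultimately have "zs ! Suc j = 0" using assms(3) by (simp add: last_conv_nth)
    then show ?thesis using root_sequence_nonneg[OF assms(2), of i] ij by simp
  next
    case False
    then show ?thesis using assms(1) ij by (simp add: swappable_def nth_butlast)
  qed
  then show ?thesis using assms(1) ij by (simp add: swappable_def nth_butlast)
qed

definition root_shift :: "nat \<Rightarrow> int list \<Rightarrow> int list" where
  "root_shift s zs = map (\<lambda>z. z - int s) (drop s zs)"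

lemma length_root_shift [simp]: "length (root_shift s zs) = length zs - s"
  by (simp add: root_shift_def)

lemma nth_root_shift [simp]: "k < length zs - s \<Longrightarrow> root_shift s zs ! k = zs ! (s + k) - int s"
  by (simp add: root_shift_def)

lemma root_sequence_root_shift:
  assumes "root_sequence zs" "0 < s" "s < length zs"
    and low: "\<forall>k<s. zs ! k = int k" and high: "\<forall>k. s \<le> k \<and> k < length zs \<longrightarrow> int s \<le> zs ! k"
  shows "root_sequence (root_shift s zs)"
proof -
  obtain s' where s': "s = Suc s'" using assms(2) gr0_implies_Suc by blast
  then have "zs ! s \<le> zs ! s' + 1" using assms(1,3) by (simp add: root_sequence_def)
  then have "zs ! s = int s" using low high assms(3) s' by fastforce
  moreover have "zs ! Suc (s + k) \<le> zs ! (s + k) + 1" if "Suc (s + k) < length zs" for k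
    using assms(1) that by (simp add: root_sequence_def)
  ultimately show ?thesis
    using assms(3) high by (auto simp: root_sequence_def all_set_conv_all_nth root_shift_def)
qed

lemma count_root_shift:
  assumes low: "\<forall>k<s. zs ! k = int k" and "0 \<le> x"
  shows "count (mset (root_shift s zs)) x = count (mset zs) (x + int s)"
proof -
  have "x + int s \<notin> set (take s zs)"
    using low assms(2) by (auto simp: in_set_conv_nth)
  then have "count_list zs (x + int s) = count_list (drop s zs) (x + int s)"
    by (metis append_take_drop_id count_list_append count_notin add_0)
  also have "\<dots> = count_list (root_shift s zs) x"
    unfolding root_shift_def using count_list_map_conv[of "\<lambda>z. z - int s" "drop s zs" "x + int s"]
    by (simp add: inj_def)
  finally show ?thesis by (simp add: count_mset)
qed

lemma count_propagates_root_shift: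
  assumes "count_propagates zs" and low: "\<forall>k<s. zs ! k = int k"
  shows "count_propagates (root_shift s zs)"
  unfolding count_propagates_def
proof (intro allI impI)
  fix x :: int
  assume x: "0 \<le> x" and "(\<exists>z\<in>set (root_shift s zs). x + 2 \<le> z) \<and> 2 \<le> count (mset (root_shift s zs)) x"
  then obtain k where "k < length zs - s" "x + 2 \<le> zs ! (s + k) - int s"
    and two: "2 \<le> count (mset zs) (x + int s)"
    by (auto simp: in_set_conv_nth count_root_shift[OF low])
  then have "\<exists>z\<in>set zs. x + int s + 2 \<le> z" by (auto intro!: bexI[of _ "zs ! (s + k)"])
  then have "2 \<le> count (mset zs) (x + int s + 1)"
    using assms(1) two x unfolding count_propagates_def by (metis add_nonneg_nonneg of_nat_0_le_iff)
  then show "2 \<le> count (mset (root_shift s zs)) (x + 1)"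
    using x by (simp add: count_root_shift[OF low] algebra_simps)
qed

lemma staircase_prefix_of_root_shift:
  assumes "staircase_prefix (root_shift s zs)" and low: "\<forall>k<s. zs ! k = int k"
  shows "staircase_prefix zs"
  unfolding staircase_prefix_def
proof (intro allI impI)
  fix k assume k: "k < length zs" and "\<exists>z\<in>set zs. int k \<le> z"
  then obtain j where j: "j < length zs" "int k \<le> zs ! j" by (auto simp: in_set_conv_nth)
  show "zs ! k = int k"
  proof (cases "k < s")
    case False
    then have "s \<le> j" using j low by (metis le_less_trans not_le of_nat_less_iff)
    then have "j - s < length (root_shift s zs)" using j by simp
    then have "root_shift s zs ! (j - s) \<in> set (root_shift s zs)" by (rule nth_mem)
    moreover have "int (k - s) \<le> root_shift s zs ! (j - s)" using j False \<open>s \<le> j\<close> by simp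
    moreover have "k - s < length (root_shift s zs)" using k False by simp
    ultimately have "root_shift s zs ! (k - s) = int (k - s)"
      using assms(1) unfolding staircase_prefix_def by blast
    then show ?thesis using k False by simp
  qed (use low in simp)
qed

lemma swappable_of_root_shift: "swappable (root_shift s zs) i j \<Longrightarrow> swappable zs (i + s) (j + s)"
  by (auto simp: swappable_def algebra_simps Suc_diff_le less_diff_conv)

lemma root_sequence_swap:
  assumes "root_sequence zs" "swappable zs i j"
  shows "root_sequence (zs[i := zs ! j, j := zs ! i])"
proof -
  have ij: "0 < i" "i < j" "j < length zs" "zs ! i < zs ! j" "zs ! j \<le> zs ! (i - 1) + 1"
    "Suc j < length zs \<Longrightarrow> zs ! Suc j \<le> zs ! i + 1"
    using assms(2) by (auto simp: swappable_def)
  have step: "zs ! Suc k \<le> zs ! k + 1" if "Suc k < length zs" for k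
    using assms(1) that by (simp add: root_sequence_def)
  obtain j' where j': "j = Suc j'" using ij(2) less_imp_Suc_add by blast
  have "zs ! i \<le> zs ! j' + 1" using step[of j'] ij j' by simp
  moreover have "zs ! Suc i \<le> zs ! j + 1" using step[of i] ij by simp
  moreover have "mset (zs[i := zs ! j, j := zs ! i]) = mset zs"
    using mset_swap[of j zs i] ij by simp
  then have "set (zs[i := zs ! j, j := zs ! i]) = set zs" by (metis set_mset_mset)
  ultimately show ?thesis
    using assms(1) ij step j' by (auto simp: root_sequence_def nth_list_update)
qed

lemma threshold_persists:
  fixes zs :: "int list"
  assumes "\<forall>i. 0 < i \<and> i < n \<and> w - 1 \<le> zs ! (i - 1) \<longrightarrow> w \<le> zs ! i"
    and "w - 1 \<le> zs ! k" "k < i" "i < n"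
  shows "w \<le> zs ! i"
  using assms(3,4)
proof (induction i)
  case (Suc i)
  then have "w - 1 \<le> zs ! i" using assms(2) by (cases "k = i") auto
  then show ?case using assms(1) Suc.prems by fastforce
qed simp

lemma count_le_1_below_last:
  assumes "root_sequence zs" "count_propagates zs"
    and no_descent: "\<forall>i. 0 < i \<and> i < length zs - 1 \<and> last zs - 1 \<le> zs ! (i - 1) \<longrightarrow> last zs \<le> zs ! i"
    and "0 \<le> x" "x < last zs"
  shows "count (mset zs) x \<le> 1"
  using assms(4,5)
proof (induction "nat (last zs - 1 - x)" arbitrary: x)
  case 0
  have "zs \<noteq> []" using assms(1) by (simp add: root_sequence_def)
  then have last: "zs ! (length zs - 1) = last zs" by (simp add: last_conv_nth)
  have "a = b" if "a < length zs" "b < length zs" "zs ! a = x" "zs ! b = x" "a < b" for a b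
  proof -
    have "b \<noteq> length zs - 1" using that last 0 by auto
    then have "b < length zs - 1" using that by simp
    then show ?thesis using threshold_persists[OF no_descent, of a b] that 0 by simp
  qed
  then show ?case unfolding count_mset_le_1_iff by (metis linorder_neqE_nat)
next
  case (Suc d)
  have "last zs \<in> set zs" using assms(1) by (simp add: root_sequence_def)
  moreover have "x + 2 \<le> last zs" using Suc.hyps(2) by linarith
  moreover have "count (mset zs) (x + 1) \<le> 1" using Suc.hyps(1)[of "x + 1"] Suc by simp
  ultimately have "\<not> 2 \<le> count (mset zs) x"
    using assms(2) Suc.prems(1) unfolding count_propagates_def by fastforce
  then show ?case by simp
qed

lemma root_sequence_identity_below:
  assumes "root_sequence zs" and distinct: "\<forall>x. 0 \<le> x \<and> x < w \<longrightarrow> count (mset zs) x \<le> 1"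
    and "k < length zs" "int k < w"
  shows "zs ! k = int k"
  using assms(3,4)
proof (induction k rule: less_induct)
  case (less k)
  define x where "x = zs ! k"
  have "0 \<le> x" "x \<le> int k"
    using root_sequence_nonneg[OF assms(1)] root_sequence_le_index[OF assms(1)] less.prems
    by (simp_all add: x_def)
  show ?case
  proof (rule ccontr)
    assume "zs ! k \<noteq> int k"
    then have "nat x < k" using \<open>0 \<le> x\<close> \<open>x \<le> int k\<close> by (simp add: x_def)
    then have "zs ! nat x = x" using less.IH less.prems \<open>0 \<le> x\<close> by fastforce
    moreover have "count (mset zs) x \<le> 1" using distinct \<open>0 \<le> x\<close> \<open>x \<le> int k\<close> less.prems by simp
    ultimately show False
      using \<open>nat x < k\<close> less.prems(1) unfolding count_mset_le_1_iff x_def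
      by (metis less_imp_le_nat less_le_trans nat_neq_iff)
  qed
qed

lemma root_sequence_split_at_last:
  assumes "root_sequence zs" "count_propagates zs" "last zs = int s" "0 < s"
    and no_descent: "\<forall>i. 0 < i \<and> i < length zs - 1 \<and> int s - 1 \<le> zs ! (i - 1) \<longrightarrow> int s \<le> zs ! i"
  shows "s < length zs" and low: "\<forall>k<s. zs ! k = int k"
    and "\<forall>k. s \<le> k \<and> k < length zs \<longrightarrow> int s \<le> zs ! k"
proof -
  have "zs \<noteq> []" using assms(1) by (simp add: root_sequence_def)
  then have last: "zs ! (length zs - 1) = int s" using assms(3) by (simp add: last_conv_nth)
  then have "int s \<le> int (length zs - 1)"
    using root_sequence_le_index[OF assms(1), of "length zs - 1"] \<open>zs \<noteq> []\<close> by simp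
  moreover have "0 < length zs" using \<open>zs \<noteq> []\<close> by simp
  ultimately show "s < length zs" by linarith
  have "\<forall>x. 0 \<le> x \<and> x < int s \<longrightarrow> count (mset zs) x \<le> 1"
    using count_le_1_below_last[OF assms(1,2)] no_descent assms(3) by simp
  then show low: "\<forall>k<s. zs ! k = int k"
    using root_sequence_identity_below[OF assms(1)] \<open>s < length zs\<close> by auto
  show "\<forall>k. s \<le> k \<and> k < length zs \<longrightarrow> int s \<le> zs ! k"
  proof (intro allI impI)
    fix k assume k: "s \<le> k \<and> k < length zs"
    show "int s \<le> zs ! k"
    proof (cases "k = length zs - 1")
      case False
      have "int s - 1 \<le> zs ! (s - 1)" using low assms(4) by simp
      moreover have "s - 1 < k" "k < length zs - 1" using k False assms(4) by auto
      ultimately show ?thesis by (rule threshold_persists[OF no_descent])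
    qed (use last in simp)
  qed
qed

lemma two_le_length_if_not_staircase_prefix:
  assumes "root_sequence zs" "\<not> staircase_prefix zs"
  shows "2 \<le> length zs"
proof (rule ccontr)
  assume "\<not> 2 \<le> length zs"
  moreover have "0 < length zs" using assms(1) by (simp add: root_sequence_def)
  ultimately have "length zs = 1" by linarith
  then have "staircase_prefix zs" using assms(1) by (simp add: staircase_prefix_def root_sequence_def)
  with assms(2) show False by simp
qed

text \<open>Induction on the length, with \<open>w\<close> the last entry. If \<open>w = 0\<close>, drop it. If some
  entry below \<open>w\<close> follows one \<open>\<ge> w - 1\<close>, exchange it with the last entry. Otherwise every
  value below \<open>w\<close> occurs at most once, which forces the sequence to start with
  \<open>0, \<dots>, w - 1\<close> followed by entries \<open>\<ge> w\<close>; cut off that prefix and subtract \<open>w\<close>.\<close>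
theorem swappable_exists:
  assumes "root_sequence zs" "count_propagates zs" "\<not> staircase_prefix zs"
  shows "\<exists>i j. swappable zs i j"
  using assms
proof (induction "length zs" arbitrary: zs rule: less_induct)
  case less
  let ?n = "length zs" and ?w = "last zs"
  have ne: "zs \<noteq> []" using less.prems(1) by (simp add: root_sequence_def)
  then have last: "?w = zs ! (?n - 1)" by (simp add: last_conv_nth)
  have n2: "2 \<le> ?n" using two_le_length_if_not_staircase_prefix less.prems(1,3) .
  show ?case
  proof (cases "?w = 0")
    case True
    have "root_sequence (butlast zs)" using root_sequence_butlast less.prems(1) n2 by blast
    moreover have "count_propagates (butlast zs)"
      using count_propagates_butlast less.prems(2) ne True by blast
    moreover have "\<not> staircase_prefix (butlast zs)"
      using staircase_prefix_of_butlast less.prems(1,3) True by blast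
    moreover have "length (butlast zs) < ?n" using ne by simp
    ultimately obtain i j where "swappable (butlast zs) i j"
      using less.hyps by blast
    then show ?thesis using swappable_of_butlast less.prems(1) True by blast
  next
    case False
    moreover have "0 \<le> ?w" using last root_sequence_nonneg[OF less.prems(1)] ne by simp
    ultimately obtain s where w: "?w = int s" "0 < s" using zero_less_imp_eq_int by force
    show ?thesis
    proof (cases "\<exists>i. 0 < i \<and> i < ?n - 1 \<and> ?w - 1 \<le> zs ! (i - 1) \<and> zs ! i < ?w")
      case True
      then obtain i where "0 < i" "i < ?n - 1" "?w - 1 \<le> zs ! (i - 1)" "zs ! i < ?w" by blast
      moreover have "Suc (?n - 1) = ?n" using n2 by simp
      ultimately have "swappable zs i (?n - 1)" using last by (simp add: swappable_def)
      then show ?thesis by blast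
    next
      case False
      then have "\<forall>i. 0 < i \<and> i < ?n - 1 \<and> int s - 1 \<le> zs ! (i - 1) \<longrightarrow> int s \<le> zs ! i"
        using w by (auto simp: not_less)
      note split = root_sequence_split_at_last[OF less.prems(1,2) w this]
      have "root_sequence (root_shift s zs)"
        using root_sequence_root_shift[OF less.prems(1) w(2)] split by blast
      moreover have "count_propagates (root_shift s zs)"
        using count_propagates_root_shift[OF less.prems(2) split(2)] .
      moreover have "\<not> staircase_prefix (root_shift s zs)"
        using staircase_prefix_of_root_shift split(2) less.prems(3) by blast
      moreover have "length (root_shift s zs) < ?n" using split(1) w(2) by simp
      ultimately obtain i j where "swappable (root_shift s zs) i j"
        using less.hyps by blast
      then show ?thesis using swappable_of_root_shift by blast
    qed
  qed
qed

section \<open>Exchanges in the rook equivalence graph\<close>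

lemma root_vec_nth: "k < length B \<Longrightarrow> root_vec B ! k = int k - int (B ! k)"
  by (simp add: root_vec_def)

lemma root_vec_le_index: "k < length B \<Longrightarrow> root_vec B ! k \<le> int k"
  by (simp add: root_vec_nth)

lemma ferrers_iff_root_vec_steps:
  "ferrers B \<longleftrightarrow> (\<forall>k. Suc k < length B \<longrightarrow> root_vec B ! Suc k \<le> root_vec B ! k + 1)"
  by (auto simp: ferrers_def sorted_iff_nth_Suc root_vec_nth)

lemma root_sequence_root_vec:
  assumes "ferrers B" "B \<noteq> []" "\<forall>z\<in>set (root_vec B). 0 \<le> z"
  shows "root_sequence (root_vec B)"
proof -
  have "0 \<le> root_vec B ! 0" using assms(3) nth_mem[of 0 "root_vec B"] assms(2) by simp
  then have "root_vec B ! 0 = 0" using assms(2) by (simp add: root_vec_nth)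
  moreover have "root_vec B \<noteq> []" using assms(2) by (simp add: root_vec_def)
  ultimately show ?thesis
    using assms(1,3) unfolding root_sequence_def ferrers_iff_root_vec_steps by simp
qed

lemma board_edge_swap:
  assumes "ferrers X" "root_sequence (root_vec X)" "swappable (root_vec X) i j"
  obtains Y where "length Y = length X" "ferrers Y" "board_edge X Y"
    "root_vec Y = (root_vec X)[i := root_vec X ! j, j := root_vec X ! i]"
proof -
  let ?z = "root_vec X"
  have ij: "0 < i" "i < j" "j < length X" "?z ! i < ?z ! j" "?z ! j \<le> ?z ! (i - 1) + 1"
    using assms(3) by (auto simp: swappable_def)
  define d where "d = nat (?z ! j - ?z ! i)"
  have "?z ! (i - 1) \<le> int (i - 1)" using root_sequence_le_index[OF assms(2), of "i - 1"] ij by simp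
  then have "d \<le> X ! i" and "0 < d" using ij by (auto simp: d_def root_vec_nth)
  define Y where "Y = X[i := X ! i - d, j := X ! j + d]"
  have Y: "length Y = length X" "Y ! i + d = X ! i" "Y ! j = X ! j + d"
    "\<forall>l<length X. l \<noteq> i \<and> l \<noteq> j \<longrightarrow> X ! l = Y ! l"
    using ij \<open>d \<le> X ! i\<close> by (auto simp: Y_def nth_list_update)
  have root_Y: "root_vec Y = ?z[i := ?z ! j, j := ?z ! i]"
    using ij Y \<open>d \<le> X ! i\<close> by (intro nth_equalityI) (auto simp: root_vec_nth nth_list_update d_def)
  have "root_sequence (root_vec Y)"
    unfolding root_Y by (rule root_sequence_swap[OF assms(2,3)])
  then have "ferrers Y" by (simp add: ferrers_iff_root_vec_steps root_sequence_def)
  moreover have "\<exists>i j k. i < length X \<and> j < length X \<and> i \<noteq> j \<and> 0 < k \<and> X ! i = Y ! i + k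
      \<and> X ! j + k = Y ! j \<and> (\<forall>l<length X. l \<noteq> i \<and> l \<noteq> j \<longrightarrow> X ! l = Y ! l)"
    by (rule exI[of _ i], rule exI[of _ j], rule exI[of _ d]) (use ij Y \<open>0 < d\<close> in auto)
  then have "board_edge X Y"
    unfolding board_edge_def Let_def using Y(1) by (intro exI[of _ 0]) simp
  ultimately show ?thesis using that Y(1) root_Y by blast
qed

definition root_moment :: "int list \<Rightarrow> int" where
  "root_moment zs = (\<Sum>k<length zs. int k * zs ! k)"

lemma root_moment_nonneg: "\<forall>z\<in>set zs. 0 \<le> z \<Longrightarrow> 0 \<le> root_moment zs"
  unfolding root_moment_def by (intro sum_nonneg) simp

lemma root_moment_swap:
  assumes "i < j" "j < length zs"
  shows "root_moment (zs[i := zs ! j, j := zs ! i]) = root_moment zs - (int j - int i) * (zs ! j - zs ! i)"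
proof -
  have "root_moment (zs[i := zs ! j, j := zs ! i])
      = (\<Sum>k<length zs. int k * zs ! k + ((if k = i then int i * (zs ! j - zs ! i) else 0)
                                          + (if k = j then int j * (zs ! i - zs ! j) else 0)))"
    unfolding root_moment_def using assms by (intro sum.cong) (auto simp: nth_list_update algebra_simps)
  also have "\<dots> = root_moment zs + (int i * (zs ! j - zs ! i) + int j * (zs ! i - zs ! j))"
    using assms by (simp add: sum.distrib root_moment_def)
  finally show ?thesis by (simp add: algebra_simps)
qed

lemma G_edge_cong: "rook_equiv X Y \<Longrightarrow> G_edge X = G_edge Y"
  by (auto simp: G_edge_def rook_equiv_def fun_eq_iff)

lemma G_edge_exchange:
  assumes "ferrers X" "root_sequence (root_vec X)" "swappable (root_vec X) i j"
  obtains Y where "G_edge X X Y" "length Y = length X" "mset (root_vec Y) = mset (root_vec X)"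
    "root_sequence (root_vec Y)" "root_moment (root_vec Y) < root_moment (root_vec X)"
proof -
  obtain Y where Y: "length Y = length X" "ferrers Y" "board_edge X Y"
    and root_Y: "root_vec Y = (root_vec X)[i := root_vec X ! j, j := root_vec X ! i]"
    using board_edge_swap assms by blast
  have ij: "i < j" "j < length (root_vec X)" "root_vec X ! i < root_vec X ! j"
    using assms(3) by (auto simp: swappable_def)
  have mset_Y: "mset (root_vec Y) = mset (root_vec X)"
    using root_Y mset_swap[of j "root_vec X" i] ij by simp
  then have "rook_equiv Y X" using rook_equiv_if_mset_root_vec_eq Y(2) assms(1) by blast
  then have "G_edge X X Y" using assms(1) Y(2,3) by (simp add: G_edge_def rook_equiv_def)
  moreover have "root_sequence (root_vec Y)"
    unfolding root_Y by (rule root_sequence_swap[OF assms(2,3)])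
  moreover have "root_moment (root_vec Y) < root_moment (root_vec X)"
    unfolding root_Y root_moment_swap[OF ij(1,2)] using ij by simp
  ultimately show ?thesis using that Y(1) mset_Y by blast
qed

lemma staircase_prefix_reachable:
  assumes "ferrers X" "root_sequence (root_vec X)" "count_propagates (root_vec X)"
  shows "\<exists>Y. (G_edge X)\<^sup>*\<^sup>* X Y \<and> length Y = length X \<and> mset (root_vec Y) = mset (root_vec X)
           \<and> staircase_prefix (root_vec Y)"
  using assms
proof (induction "nat (root_moment (root_vec X))" arbitrary: X rule: less_induct)
  case less
  show ?case
  proof (cases "staircase_prefix (root_vec X)")
    case False
    then obtain i j where "swappable (root_vec X) i j"
      using swappable_exists less.prems(2,3) by blast
    then obtain Y where edge: "G_edge X X Y" and Y: "length Y = length X"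
      "mset (root_vec Y) = mset (root_vec X)" "root_sequence (root_vec Y)"
      "root_moment (root_vec Y) < root_moment (root_vec X)"
      using G_edge_exchange less.prems(1,2) by blast
    have "0 \<le> root_moment (root_vec Y)"
      using Y(3) by (intro root_moment_nonneg) (simp add: root_sequence_def)
    then have "nat (root_moment (root_vec Y)) < nat (root_moment (root_vec X))" using Y(4) by simp
    moreover have "ferrers Y" "rook_equiv Y X" using edge by (simp_all add: G_edge_def)
    moreover have "count_propagates (root_vec Y)"
      using less.prems(3) count_propagates_mset_cong[OF Y(2)] by simp
    ultimately obtain Z where "(G_edge Y)\<^sup>*\<^sup>* Y Z" "length Z = length X"
      "mset (root_vec Z) = mset (root_vec X)" "staircase_prefix (root_vec Z)"
      using less.hyps Y by fastforce
    moreover have "G_edge Y = G_edge X" using G_edge_cong \<open>rook_equiv Y X\<close> .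
    ultimately show ?thesis using edge by (metis converse_rtranclp_into_rtranclp)
  qed blast
qed

lemma root_count_eq_count: "root_count B x = count (mset (root_vec B)) x"
  unfolding root_count_def count_mset count_list_eq_length_filter
  by (metis (mono_tags) filter_cong)

theorem lemma9:
  fixes B :: "nat list"
  assumes "ferrers B"
    and "B \<noteq> []"
    and "\<forall>z \<in> set (root_vec B). 0 \<le> z"
    and "\<forall>i::int. 0 \<le> i \<and> i < Max (set (root_vec B)) - 1 \<and> root_count B i > 1
           \<longrightarrow> root_count B (i + 1) > 1"
  shows "\<exists>B'. (G_edge B)\<^sup>*\<^sup>* B B' \<and> length B' = length B \<and>
           take (nat (Max (set (root_vec B))) + 1) (root_vec B')
             = map int [0..<nat (Max (set (root_vec B))) + 1]"
proof -
  have "root_sequence (root_vec B)" using root_sequence_root_vec assms(1-3) .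
  moreover have "count_propagates (root_vec B)"
    using count_propagates_if_Max assms(4) by (simp add: root_count_eq_count)
  ultimately obtain Y where Y: "(G_edge B)\<^sup>*\<^sup>* B Y" "length Y = length B"
    and mset_Y: "mset (root_vec Y) = mset (root_vec B)" and "staircase_prefix (root_vec Y)"
    using staircase_prefix_reachable assms(1) by blast
  have set_Y: "set (root_vec Y) = set (root_vec B)" using mset_Y by (metis set_mset_mset)
  have "root_vec Y \<noteq> []" using Y(2) assms(2) by (simp add: root_vec_def)
  moreover have "\<forall>z\<in>set (root_vec Y). 0 \<le> z" using assms(3) set_Y by simp
  moreover have "\<forall>k<length (root_vec Y). root_vec Y ! k \<le> int k" using root_vec_le_index by simp
  ultimately have "take (nat (Max (set (root_vec Y))) + 1) (root_vec Y)
      = map int [0..<nat (Max (set (root_vec Y))) + 1]"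
    using take_staircase_prefix \<open>staircase_prefix (root_vec Y)\<close> by blast
  then show ?thesis using Y unfolding set_Y by blast
qed

end
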